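(* Let $\alpha, \beta, \tau > 0$. Let $u \in \mathrm{H}^{1/2}(\mathbb{R})$ be continuous and affine on each interval $[k\tau,(k+1)\tau]$, $k \in \mathbb{Z}$, and let $v$ be its upwinded interpolant. Then $$| v|_{\mathrm{H}^{1/2}_w} \leq C |u|_{\mathrm{H}^{1/2}},$$ with a constant $C$ independent of $\alpha$, $\beta$, $\tau$ and $u$.
   Context: The upwinded interpolant of a continuous $u$ is the unique continuous function $v$ with $v(k\tau) = u(k\tau)$ for all $k \in \mathbb{Z}$ and which on each $[k\tau,(k+1)\tau]$ is of the form $c_1 + c_2\exp(-\beta t/\alpha)$. $|u|_{\mathrm{H}^{1/2}}$ is the $\mathrm{H}^{1/2}(\mathbb{R})$ seminorm (Slobodetski: $\iint \frac{|u(x+y)-u(x)|^2}{|y|^2}\,\mathrm{d}x\,\mathrm{d}y$, square-rooted). For $w \in \mathrm{L}^2(\mathbb{R})$, $|w|_{\mathrm{H}^{1/2}_w}$ is the smallest $C \geq 0$ such that $\|w - w(\cdot + y)\|_{\mathrm{L}^2} \leq C|y|^{1/2}$ for all $y \in \mathbb{R}$ (possibly $+\infty$). *)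

theory Defs
  imports "HOL-Analysis.Analysis"
begin

definition slob_sq :: "(real \<Rightarrow> real) \<Rightarrow> ennreal" where
  "slob_sq u = (\<integral>\<^sup>+ x. (\<integral>\<^sup>+ y. ennreal (\<bar>u (x + y) - u x\<bar>^2 / \<bar>y\<bar>^2) \<partial>lborel) \<partial>lborel)"

definition in_H_half :: "(real \<Rightarrow> real) \<Rightarrow> bool" where
  "in_H_half u \<longleftrightarrow> u \<in> borel_measurable lborel
     \<and> (\<integral>\<^sup>+ x. ennreal ((u x)^2) \<partial>lborel) < \<infinity>
     \<and> slob_sq u < \<infinity>"

definition slob_seminorm :: "(real \<Rightarrow> real) \<Rightarrow> real" where
  "slob_seminorm u = sqrt (enn2real (slob_sq u))"

text \<open>Weak seminorm: smallest C \<ge> 0 (possibly infinity) with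
  ||w - w(.+y)||_{L^2} \<le> C |y|^{1/2} for all y, i.e. ||w - w(.+y)||^2 \<le> C^2 |y|.\<close>
definition weak_seminorm :: "(real \<Rightarrow> real) \<Rightarrow> ennreal" where
  "weak_seminorm w = Inf {C :: ennreal. \<forall>y :: real.
      (\<integral>\<^sup>+ x. ennreal ((w x - w (x + y))^2) \<partial>lborel) \<le> C^2 * ennreal \<bar>y\<bar>}"

definition piecewise_affine :: "real \<Rightarrow> (real \<Rightarrow> real) \<Rightarrow> bool" where
  "piecewise_affine \<tau> u \<longleftrightarrow> (\<forall>k :: int. \<exists>a b :: real.
      \<forall>t \<in> {of_int k * \<tau> .. (of_int k + 1) * \<tau>}. u t = a + b * t)"

definition upwinded_interpolant ::
    "real \<Rightarrow> real \<Rightarrow> real \<Rightarrow> (real \<Rightarrow> real) \<Rightarrow> (real \<Rightarrow> real) \<Rightarrow> bool" where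
  "upwinded_interpolant \<alpha> \<beta> \<tau> u v \<longleftrightarrow> continuous_on UNIV v
     \<and> (\<forall>k :: int. v (of_int k * \<tau>) = u (of_int k * \<tau>))
     \<and> (\<forall>k :: int. \<exists>c1 c2 :: real. \<forall>t \<in> {of_int k * \<tau> .. (of_int k + 1) * \<tau>}.
           v t = c1 + c2 * exp (- \<beta> * t / \<alpha>))"

end

theory Submission
  imports Defs
begin

text \<open>
  Write v = u + e. On the cell [k\<tau>, (k+1)\<tau>] both u and v run from u(k\<tau>) to u((k+1)\<tau>):
  u linearly, v along the profile \<phi>(s) = (1 - exp(-\<gamma>s)) / (1 - exp(-\<gamma>)), \<gamma> = \<beta>\<tau>/\<alpha>,
  which increases from 0 to 1. Hence e = d_k (\<phi>(s) - s) there, d_k being the jump of u across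
  the cell. For a shift y = h\<tau> with 0 < h < 1 that stays inside a cell,
  (e(x) - e(x+y))^2 \<le> d_k^2 (h + \<phi>(s+h) - \<phi>(s)), and the increments of \<phi> average to at most h
  over a cell, whatever \<gamma> is; shifts leaving the cell concern only a fraction h of the points.
  So \<parallel>e - e(\<cdot> + y)\<parallel>^2 is at most 6|y|/\<tau> times the integral of the squared jumps, which in turn
  is bounded by the translation difference of u at \<tau>/2. Finally \<parallel>w - w(\<cdot> + y)\<parallel>^2 \<le> 4|y| |w|^2
  for every w: average the triangle inequality for the shifts z and y - z over z \<in> [0, y].
\<close>

lemma ennreal_square_diff_le:
  "ennreal (((p::real) - r)^2) \<le> 2 * ennreal ((p - q)^2) + 2 * ennreal ((q - r)^2)"
proof -
  have "2 * (p - q)^2 + 2 * (q - r)^2 - (p - r)^2 = (p - 2*q + r)^2"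
    by (simp add: power2_eq_square algebra_simps)
  then have "(p - r)^2 \<le> 2 * (p - q)^2 + 2 * (q - r)^2"
    by (metis diff_ge_0_iff_ge zero_le_power2)
  then have "ennreal ((p - r)^2) \<le> ennreal (2 * (p - q)^2 + 2 * (q - r)^2)"
    by (rule ennreal_leI)
  then show ?thesis
    by (simp add: ennreal_mult')
qed

lemma ennreal_square_diff_le_sum:
  assumes "(p::real)^2 \<le> a" "q^2 \<le> b"
  shows "ennreal ((p - q)^2) \<le> 2 * ennreal a + 2 * ennreal b"
proof -
  have "ennreal ((p - q)^2) \<le> 2 * ennreal ((p - 0)^2) + 2 * ennreal ((0 - q)^2)"
    by (rule ennreal_square_diff_le)
  also have "\<dots> \<le> 2 * ennreal a + 2 * ennreal b"
    using assms by (intro add_mono mult_left_mono ennreal_leI) auto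
  finally show ?thesis .
qed

lemma square_diff_le_add:
  fixes a b :: real
  assumes "0 \<le> a" "a \<le> 1" "0 \<le> b" "b \<le> 1"
  shows "(a - b)^2 \<le> a + b"
proof -
  have "(a - b)^2 = \<bar>a - b\<bar> * \<bar>a - b\<bar>" by (simp add: power2_eq_square)
  also have "\<dots> \<le> \<bar>a - b\<bar>" using assms by (intro mult_left_le) auto
  also have "\<dots> \<le> a + b" using assms by linarith
  finally show ?thesis .
qed

lemma floor_frac_scaled: "(\<tau>::real) \<noteq> 0 \<Longrightarrow> (of_int \<lfloor>x/\<tau>\<rfloor> + frac (x/\<tau>)) * \<tau> = x"
  by (simp add: frac_def)

lemma frac_add_of_gt_1:
  fixes a b :: real
  assumes "0 \<le> b" "b < 1" "1 < frac a + b"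
  shows "frac (a + b) = frac a + b - 1"
proof -
  have "\<lfloor>a + b\<rfloor> = \<lfloor>a\<rfloor> + 1"
    using assms frac_lt_1[of a] by (simp add: frac_def floor_eq_iff)
  then show ?thesis by (simp add: frac_def)
qed

lemma borel_measurable_frac [measurable]: "(frac :: real \<Rightarrow> real) \<in> borel_measurable borel"
  unfolding frac_def by measurable

lemma nn_integral_lborel_shift:
  fixes f :: "real \<Rightarrow> ennreal"
  assumes "f \<in> borel_measurable borel"
  shows "(\<integral>\<^sup>+x. f (x + c) \<partial>lborel) = integral\<^sup>N lborel f"
  using nn_integral_real_affine[OF assms, of 1 c] by (simp add: add.commute)

lemma nn_integral_lborel_reflect:
  fixes f :: "real \<Rightarrow> ennreal"
  assumes "f \<in> borel_measurable borel"
  shows "(\<integral>\<^sup>+x. f (c - x) \<partial>lborel) = integral\<^sup>N lborel f"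
  using nn_integral_real_affine[OF assms, of "-1" c] by simp

lemma nn_integral_lborel_rescale:
  fixes f :: "real \<Rightarrow> ennreal"
  assumes "f \<in> borel_measurable borel" "0 < c"
  shows "(\<integral>\<^sup>+x. f (x/c) \<partial>lborel) = ennreal c * integral\<^sup>N lborel f"
proof -
  have "integral\<^sup>N lborel f = ennreal (1/c) * (\<integral>\<^sup>+x. f (x/c) \<partial>lborel)"
    using nn_integral_real_affine[OF assms(1), of "1/c" 0] \<open>0 < c\<close> by simp
  moreover have "ennreal c * ennreal (1/c) = 1"
    using \<open>0 < c\<close> by (simp flip: ennreal_mult)
  ultimately show ?thesis by (simp add: mult.assoc[symmetric])
qed

lemma nn_integral_floor_frac:
  fixes a :: "int \<Rightarrow> ennreal" and b :: "real \<Rightarrow> ennreal"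
  assumes [measurable]: "b \<in> borel_measurable borel"
  shows "(\<integral>\<^sup>+x. a \<lfloor>x\<rfloor> * b (frac x) \<partial>lborel)
       = (\<integral>\<^sup>+k. a k \<partial>count_space UNIV) * (\<integral>\<^sup>+s\<in>{0..<1}. b s \<partial>lborel)"
proof -
  interpret P: pair_sigma_finite lborel "count_space (UNIV::int set)"
    by (intro pair_sigma_finite.intro sigma_finite_measure_count_space_countable)
      (auto simp: lborel.sigma_finite_measure_axioms)
  let ?f = "\<lambda>(x::real) k. a \<lfloor>x\<rfloor> * b (frac x) * indicator {\<lfloor>x\<rfloor>} k"
  have cell: "(\<integral>\<^sup>+x. ?f x k \<partial>lborel) = a k * (\<integral>\<^sup>+s\<in>{0..<1}. b s \<partial>lborel)" for k
  proof -
    have [measurable]: "(\<lambda>x. ?f x k) \<in> borel_measurable borel"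
      unfolding indicator_def by measurable
    have "?f (of_int k + s) k = a k * (b s * indicator {0..<1} s)" for s
    proof (cases "0 \<le> s \<and> s < 1")
      case True
      then have "\<lfloor>of_int k + s\<rfloor> = k" "frac (of_int k + s) = s"
        by (simp_all add: floor_eq_iff frac_def)
      then show ?thesis using True by simp
    next
      case False
      then have "\<lfloor>of_int k + s\<rfloor> \<noteq> k" by linarith
      then show ?thesis using False by simp
    qed
    then have "(\<integral>\<^sup>+x. ?f x k \<partial>lborel) = (\<integral>\<^sup>+s. a k * (b s * indicator {0..<1} s) \<partial>lborel)"
      using nn_integral_lborel_shift[of "\<lambda>x. ?f x k" "of_int k"] by (simp add: add.commute)
    then show ?thesis by (simp add: nn_integral_cmult)
  qed
  have [measurable]: "(\<lambda>(x, k). ?f x k) \<in> borel_measurable (lborel \<Otimes>\<^sub>M count_space UNIV)"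
    unfolding indicator_def by measurable
  have "(\<integral>\<^sup>+x. a \<lfloor>x\<rfloor> * b (frac x) \<partial>lborel)
      = (\<integral>\<^sup>+x. (\<integral>\<^sup>+k. ?f x k \<partial>count_space UNIV) \<partial>lborel)"
    by (intro nn_integral_cong) (simp add: nn_integral_count_space_indicator)
  also have "\<dots> = (\<integral>\<^sup>+k. (\<integral>\<^sup>+x. ?f x k \<partial>lborel) \<partial>count_space UNIV)"
    using P.Fubini'[of ?f] by simp
  also have "\<dots> = (\<integral>\<^sup>+k. a k \<partial>count_space UNIV) * (\<integral>\<^sup>+s\<in>{0..<1}. b s \<partial>lborel)"
    by (simp add: cell nn_integral_multc)
  finally show ?thesis .
qed

lemma nn_integral_floor_frac_scaled:
  fixes a :: "int \<Rightarrow> ennreal" and b :: "real \<Rightarrow> ennreal" and \<tau> :: real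
  assumes [measurable]: "b \<in> borel_measurable borel" and "0 < \<tau>"
  shows "(\<integral>\<^sup>+x. a \<lfloor>x/\<tau>\<rfloor> * b (frac (x/\<tau>)) \<partial>lborel)
       = (\<integral>\<^sup>+x. a \<lfloor>x/\<tau>\<rfloor> \<partial>lborel) * (\<integral>\<^sup>+s\<in>{0..<1}. b s \<partial>lborel)"
proof -
  have [measurable]: "(\<lambda>x::real. a \<lfloor>x\<rfloor>) \<in> borel_measurable borel"
    by (rule measurable_compose[OF measurable_real_floor]) simp
  have count: "(\<integral>\<^sup>+x. a \<lfloor>x::real\<rfloor> \<partial>lborel) = (\<integral>\<^sup>+k. a k \<partial>count_space UNIV)"
    using nn_integral_floor_frac[of "\<lambda>_. 1" a] by simp
  have "(\<integral>\<^sup>+x. a \<lfloor>x/\<tau>\<rfloor> * b (frac (x/\<tau>)) \<partial>lborel)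
      = ennreal \<tau> * (\<integral>\<^sup>+x. a \<lfloor>x\<rfloor> * b (frac x) \<partial>lborel)"
    using \<open>0 < \<tau>\<close> by (intro nn_integral_lborel_rescale) measurable
  also have "\<dots> = ennreal \<tau> * (\<integral>\<^sup>+x. a \<lfloor>x::real\<rfloor> \<partial>lborel) * (\<integral>\<^sup>+s\<in>{0..<1}. b s \<partial>lborel)"
    unfolding count nn_integral_floor_frac[OF assms(1)] by (simp add: mult.assoc)
  also have "ennreal \<tau> * (\<integral>\<^sup>+x. a \<lfloor>x::real\<rfloor> \<partial>lborel) = (\<integral>\<^sup>+x. a \<lfloor>x/\<tau>\<rfloor> \<partial>lborel)"
    using \<open>0 < \<tau>\<close> by (intro nn_integral_lborel_rescale[symmetric]) measurable
  finally show ?thesis .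
qed

text \<open>The bound does not depend on how steep \<open>\<phi>\<close> is; this is what makes the final constant
  independent of \<open>\<alpha>\<close>, \<open>\<beta>\<close> and \<open>\<tau>\<close>.\<close>

lemma integral_increment_le:
  fixes \<phi> :: "real \<Rightarrow> real"
  assumes cont: "continuous_on UNIV \<phi>" and mono: "mono \<phi>"
    and "0 \<le> \<phi> 0" "\<phi> 1 \<le> 1" "0 \<le> h" "h \<le> 1"
  shows "integral {0..1} (\<lambda>s. \<phi> (min (s + h) 1) - \<phi> s) \<le> h"
proof -
  let ?\<phi>h = "\<lambda>s. \<phi> (min (s + h) 1)"
  have int: "\<phi> integrable_on {a..b}" for a b
    by (rule integrable_continuous_interval) (rule continuous_on_subset[OF cont], auto)
  have cont_h: "continuous_on UNIV ?\<phi>h"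
    by (intro continuous_on_compose2[OF cont]) (auto intro!: continuous_intros)
  have int_h: "?\<phi>h integrable_on {a..b}" for a b
    by (rule integrable_continuous_interval) (rule continuous_on_subset[OF cont_h], auto)
  have "integral {0..1} ?\<phi>h = integral {0..1-h} ?\<phi>h + integral {1-h..1} ?\<phi>h"
    by (rule Henstock_Kurzweil_Integration.integral_combine[symmetric]) (use assms int_h in auto)
  also have "integral {0..1-h} ?\<phi>h = integral {0..1-h} (\<phi> \<circ> (+) h)"
    by (intro integral_cong) (auto simp: add.commute)
  also have "\<dots> = integral {h..1} \<phi>"
    using integral_shift_Icc_real[of 0 "1-h" \<phi> h] by simp
  also have "integral {1-h..1} ?\<phi>h = integral {1-h..1} (\<lambda>s. \<phi> 1)"
    by (intro integral_cong) auto
  finally have "integral {0..1} ?\<phi>h = integral {h..1} \<phi> + h * \<phi> 1"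
    using assms by simp
  moreover have "integral {0..1} \<phi> = integral {0..h} \<phi> + integral {h..1} \<phi>"
    by (rule Henstock_Kurzweil_Integration.integral_combine[symmetric]) (use assms int in auto)
  moreover have "0 \<le> integral {0..h} \<phi>"
    using assms by (intro integral_nonneg int) (auto dest: monoD[OF mono, of 0])
  moreover have "h * \<phi> 1 \<le> h"
    using assms by (simp add: mult_left_le)
  ultimately show ?thesis
    by (simp add: integral_diff[OF int_h int])
qed

lemma nn_integral_increment_le:
  fixes \<phi> :: "real \<Rightarrow> real"
  assumes cont: "continuous_on UNIV \<phi>" and mono: "mono \<phi>"
    and "0 \<le> \<phi> 0" "\<phi> 1 \<le> 1" "0 \<le> h" "h \<le> 1"
  shows "(\<integral>\<^sup>+s\<in>{0..<1}. ennreal (\<phi> (min (s + h) 1) - \<phi> s) \<partial>lborel) \<le> ennreal h"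
proof -
  let ?f = "\<lambda>s. \<phi> (min (s + h) 1) - \<phi> s"
  have "continuous_on UNIV ?f"
    by (intro continuous_intros continuous_on_compose2[OF cont]) (auto intro!: continuous_intros)
  then have "(?f has_integral integral {0..1} ?f) {0..1}"
    using continuous_on_subset by (blast intro: integrable_integral integrable_continuous_interval)
  moreover have "0 \<le> ?f s" if "s \<in> {0..1}" for s
  proof -
    have "\<phi> s \<le> \<phi> (min (s + h) 1)"
      using that assms by (intro monoD[OF mono]) auto
    then show ?thesis by simp
  qed
  ultimately have "(\<integral>\<^sup>+s\<in>{0..1}. ennreal (?f s) \<partial>lborel) = ennreal (integral {0..1} ?f)"
    by (rule nn_integral_has_integral_lebesgue'[rotated])
  moreover have "(\<integral>\<^sup>+s\<in>{0..<1}. ennreal (?f s) \<partial>lborel) \<le> (\<integral>\<^sup>+s\<in>{0..1}. ennreal (?f s) \<partial>lborel)"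
    by (intro nn_integral_mono) (simp add: indicator_def)
  moreover have "ennreal (integral {0..1} ?f) \<le> ennreal h"
    by (rule ennreal_leI[OF integral_increment_le[OF assms]])
  ultimately show ?thesis
    by simp
qed

section \<open>Translation differences\<close>

definition shift_diff_sq :: "(real \<Rightarrow> real) \<Rightarrow> real \<Rightarrow> ennreal" where
  "shift_diff_sq w y = (\<integral>\<^sup>+x. ennreal ((w x - w (x + y))^2) \<partial>lborel)"

lemma shift_diff_sq_0 [simp]: "shift_diff_sq w 0 = 0"
  by (simp add: shift_diff_sq_def)

lemma borel_measurable_shift_diff_sq [measurable]:
  assumes [measurable]: "w \<in> borel_measurable borel"
  shows "shift_diff_sq w \<in> borel_measurable borel"
  unfolding shift_diff_sq_def by measurable

lemma shift_diff_sq_uminus: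
  assumes [measurable]: "w \<in> borel_measurable borel"
  shows "shift_diff_sq w (- y) = shift_diff_sq w y"
proof -
  have "shift_diff_sq w (- y) = (\<integral>\<^sup>+x. ennreal ((w (x + y) - w (x + y + - y))^2) \<partial>lborel)"
    unfolding shift_diff_sq_def by (rule nn_integral_lborel_shift[symmetric]) measurable
  then show ?thesis
    by (simp add: shift_diff_sq_def power2_commute)
qed

lemma shift_diff_sq_abs_le:
  assumes [measurable]: "w \<in> borel_measurable borel"
    and pos: "\<And>y. 0 < y \<Longrightarrow> shift_diff_sq w y \<le> B y"
  shows "shift_diff_sq w y \<le> B \<bar>y\<bar>"
proof (cases "y < 0")
  case True
  then show ?thesis using pos[of "- y"] shift_diff_sq_uminus[OF assms(1), of y] by simp
next
  case False
  then show ?thesis using pos[of y] by (cases "y = 0") auto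
qed

lemma shift_diff_sq_add_le:
  assumes [measurable]: "w \<in> borel_measurable borel"
  shows "shift_diff_sq w (a + b) \<le> 2 * shift_diff_sq w a + 2 * shift_diff_sq w b"
proof -
  have "shift_diff_sq w (a + b)
      \<le> (\<integral>\<^sup>+x. 2 * ennreal ((w x - w (x + a))^2) + 2 * ennreal ((w (x + a) - w (x + a + b))^2) \<partial>lborel)"
    unfolding shift_diff_sq_def
    by (intro nn_integral_mono) (metis ennreal_square_diff_le add.assoc)
  also have "\<dots> = 2 * shift_diff_sq w a + 2 * (\<integral>\<^sup>+x. ennreal ((w (x + a) - w (x + a + b))^2) \<partial>lborel)"
    unfolding shift_diff_sq_def by (simp add: nn_integral_add nn_integral_cmult)
  also have "(\<integral>\<^sup>+x. ennreal ((w (x + a) - w (x + a + b))^2) \<partial>lborel) = shift_diff_sq w b"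
    unfolding shift_diff_sq_def by (rule nn_integral_lborel_shift) measurable
  finally show ?thesis .
qed

lemma shift_diff_sq_sum_le:
  assumes [measurable]: "f \<in> borel_measurable borel" "g \<in> borel_measurable borel"
  shows "shift_diff_sq (\<lambda>x. f x + g x) y \<le> 2 * shift_diff_sq f y + 2 * shift_diff_sq g y"
proof -
  have "shift_diff_sq (\<lambda>x. f x + g x) y
      \<le> (\<integral>\<^sup>+x. 2 * ennreal ((f x - f (x + y))^2) + 2 * ennreal ((g x - g (x + y))^2) \<partial>lborel)"
    unfolding shift_diff_sq_def
    using ennreal_square_diff_le[where p="f x + g x" and q="f (x + y) + g x" and r="f (x + y) + g (x + y)" for x]
    by (intro nn_integral_mono) (simp add: algebra_simps)
  also have "\<dots> = 2 * shift_diff_sq f y + 2 * shift_diff_sq g y"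
    unfolding shift_diff_sq_def by (simp add: nn_integral_add nn_integral_cmult)
  finally show ?thesis .
qed

lemma shift_diff_sq_le_energy:
  assumes [measurable]: "g \<in> borel_measurable borel" and le: "\<And>x. (w x)^2 \<le> g x"
  shows "shift_diff_sq w y \<le> 4 * (\<integral>\<^sup>+x. ennreal (g x) \<partial>lborel)"
proof -
  have "ennreal ((w x - w (x + y))^2) \<le> 2 * ennreal (g x) + 2 * ennreal (g (x + y))" for x
    by (intro ennreal_square_diff_le_sum le)
  then have "shift_diff_sq w y \<le> (\<integral>\<^sup>+x. 2 * ennreal (g x) + 2 * ennreal (g (x + y)) \<partial>lborel)"
    unfolding shift_diff_sq_def by (intro nn_integral_mono)
  also have "\<dots> = 2 * (\<integral>\<^sup>+x. ennreal (g x) \<partial>lborel) + 2 * (\<integral>\<^sup>+x. ennreal (g (x + y)) \<partial>lborel)"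
    by (simp add: nn_integral_add nn_integral_cmult)
  also have "(\<integral>\<^sup>+x. ennreal (g (x + y)) \<partial>lborel) = (\<integral>\<^sup>+x. ennreal (g x) \<partial>lborel)"
    by (rule nn_integral_lborel_shift) measurable
  finally show ?thesis
    by (simp flip: distrib_right)
qed

lemma shift_diff_sq_le_average:
  assumes [measurable]: "w \<in> borel_measurable borel" and "0 \<le> y"
  shows "ennreal y * shift_diff_sq w y \<le> 4 * (\<integral>\<^sup>+z\<in>{0..y}. shift_diff_sq w z \<partial>lborel)"
proof -
  let ?I = "\<integral>\<^sup>+z\<in>{0..y}. shift_diff_sq w z \<partial>lborel"
  have "ennreal y * shift_diff_sq w y = (\<integral>\<^sup>+z. shift_diff_sq w y * indicator {0..y} z \<partial>lborel)"
    using \<open>0 \<le> y\<close> by (simp add: nn_integral_cmult_indicator mult.commute)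
  also have "\<dots> \<le> (\<integral>\<^sup>+z. 2 * (shift_diff_sq w z * indicator {0..y} z)
                       + 2 * (shift_diff_sq w (y - z) * indicator {0..y} z) \<partial>lborel)"
    using shift_diff_sq_add_le[of w "z" "y - z" for z]
    by (intro nn_integral_mono) (auto simp: indicator_def)
  also have "\<dots> = 2 * ?I + 2 * (\<integral>\<^sup>+z. shift_diff_sq w (y - z) * indicator {0..y} (y - z) \<partial>lborel)"
    by (simp add: nn_integral_add nn_integral_cmult indicator_def conj_commute)
  also have "(\<integral>\<^sup>+z. shift_diff_sq w (y - z) * indicator {0..y} (y - z) \<partial>lborel) = ?I"
    by (rule nn_integral_lborel_reflect[of "\<lambda>z. shift_diff_sq w z * indicator {0..y} z"]) measurable
  finally show ?thesis
    by (simp flip: distrib_right)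
qed

lemma set_nn_integral_shift_diff_sq_le:
  assumes [measurable]: "w \<in> borel_measurable borel" and "0 < y"
  shows "(\<integral>\<^sup>+z\<in>{0..y}. shift_diff_sq w z \<partial>lborel) \<le> ennreal (y^2) * slob_sq w"
proof -
  let ?q = "\<lambda>z. \<integral>\<^sup>+x. ennreal (\<bar>w (x + z) - w x\<bar>^2 / \<bar>z\<bar>^2) \<partial>lborel"
  have slob_swap: "slob_sq w = (\<integral>\<^sup>+z. ?q z \<partial>lborel)"
    unfolding slob_sq_def by (rule lborel_pair.Fubini') measurable
  have "shift_diff_sq w z * indicator {0..y} z \<le> ennreal (y^2) * ?q z" for z
  proof (cases "0 < z \<and> z \<le> y")
    case True
    have "(w x - w (x + z))^2 \<le> y^2 * (\<bar>w (x + z) - w x\<bar>^2 / \<bar>z\<bar>^2)" for x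
    proof -
      have "(w x - w (x + z))^2 = z^2 * (\<bar>w (x + z) - w x\<bar>^2 / \<bar>z\<bar>^2)"
        using True by (simp add: power2_commute)
      also have "\<dots> \<le> y^2 * (\<bar>w (x + z) - w x\<bar>^2 / \<bar>z\<bar>^2)"
        using True by (intro mult_right_mono power_mono) auto
      finally show ?thesis .
    qed
    then have "shift_diff_sq w z \<le> (\<integral>\<^sup>+x. ennreal (y^2) * ennreal (\<bar>w (x + z) - w x\<bar>^2 / \<bar>z\<bar>^2) \<partial>lborel)"
      unfolding shift_diff_sq_def by (intro nn_integral_mono) (simp add: ennreal_leI flip: ennreal_mult)
    also have "\<dots> = ennreal (y^2) * ?q z"
      by (rule nn_integral_cmult) measurable
    finally show ?thesis using True by simp
  next
    case False
    then show ?thesis by (cases "z = 0") (auto simp: indicator_def)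
  qed
  then have "(\<integral>\<^sup>+z\<in>{0..y}. shift_diff_sq w z \<partial>lborel) \<le> (\<integral>\<^sup>+z. ennreal (y^2) * ?q z \<partial>lborel)"
    by (intro nn_integral_mono)
  also have "\<dots> = ennreal (y^2) * slob_sq w"
    unfolding slob_swap by (rule nn_integral_cmult) measurable
  finally show ?thesis .
qed

lemma shift_diff_sq_le_slob_sq:
  assumes [measurable]: "w \<in> borel_measurable borel"
  shows "shift_diff_sq w y \<le> ennreal (4 * \<bar>y\<bar>) * slob_sq w"
proof (rule shift_diff_sq_abs_le[OF assms])
  fix y :: real
  assume "0 < y"
  show "shift_diff_sq w y \<le> ennreal (4 * y) * slob_sq w"
  proof -
    have "ennreal y * shift_diff_sq w y \<le> 4 * (\<integral>\<^sup>+z\<in>{0..y}. shift_diff_sq w z \<partial>lborel)"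
      using \<open>0 < y\<close> by (intro shift_diff_sq_le_average) auto
    also have "\<dots> \<le> 4 * (ennreal (y^2) * slob_sq w)"
      using \<open>0 < y\<close> by (intro mult_left_mono set_nn_integral_shift_diff_sq_le) auto
    also have "\<dots> = ennreal y * (ennreal (4 * y) * slob_sq w)"
      using \<open>0 < y\<close> by (simp add: power2_eq_square ennreal_mult' mult_ac)
    finally show ?thesis
      using \<open>0 < y\<close> by (simp add: ennreal_mult_le_mult_iff)
  qed
qed

lemma weak_seminorm_le_slob_seminorm:
  assumes "slob_sq u < \<infinity>" "0 \<le> c"
    and shift: "\<And>y. shift_diff_sq w y \<le> ennreal (c^2 * \<bar>y\<bar>) * slob_sq u"
  shows "weak_seminorm w \<le> ennreal (c * slob_seminorm u)"
  unfolding weak_seminorm_def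
proof (rule Inf_lower, safe)
  fix y :: real
  have "ennreal ((slob_seminorm u)^2) = slob_sq u"
    using assms(1) by (simp add: slob_seminorm_def ennreal_enn2real_if)
  then have "ennreal (c^2 * \<bar>y\<bar>) * slob_sq u = (ennreal (c * slob_seminorm u))^2 * ennreal \<bar>y\<bar>"
    using assms(2) by (simp add: slob_seminorm_def ennreal_power power_mult_distrib ennreal_mult' mult_ac)
  then show "(\<integral>\<^sup>+x. ennreal ((w x - w (x + y))^2) \<partial>lborel) \<le> (ennreal (c * slob_seminorm u))^2 * ennreal \<bar>y\<bar>"
    using shift[of y] by (simp add: shift_diff_sq_def)
qed

section \<open>Upwinded interpolation of a piecewise affine function\<close>

locale upwind_interpolation =
  fixes \<alpha> \<beta> \<tau> :: real and u v :: "real \<Rightarrow> real"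
  assumes \<alpha>_pos: "0 < \<alpha>" and \<beta>_pos: "0 < \<beta>" and \<tau>_pos: "0 < \<tau>"
    and u_cont: "continuous_on UNIV u" and u_affine: "piecewise_affine \<tau> u"
    and interp: "upwinded_interpolant \<alpha> \<beta> \<tau> u v"
begin

definition jump :: "int \<Rightarrow> real" where
  "jump k = u ((of_int k + 1) * \<tau>) - u (of_int k * \<tau>)"

definition rate :: real where
  "rate = \<beta> * \<tau> / \<alpha>"

definition profile :: "real \<Rightarrow> real" where
  "profile \<sigma> = (1 - exp (- rate * \<sigma>)) / (1 - exp (- rate))"

definition error :: "real \<Rightarrow> real" where
  "error x = v x - u x"

definition jump_sq :: "real \<Rightarrow> real" where
  "jump_sq x = (jump \<lfloor>x/\<tau>\<rfloor>)^2"

definition jump_energy :: ennreal where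
  "jump_energy = (\<integral>\<^sup>+x. ennreal (jump_sq x) \<partial>lborel)"

lemma profile_denominator_pos: "0 < 1 - exp (- rate)"
  using \<alpha>_pos \<beta>_pos \<tau>_pos by (simp add: rate_def)

lemma mono_profile: "mono profile"
  unfolding profile_def mono_def using profile_denominator_pos \<alpha>_pos \<beta>_pos \<tau>_pos
  by (auto intro!: divide_right_mono mult_left_mono simp: rate_def)

lemma profile_0 [simp]: "profile 0 = 0" and profile_1 [simp]: "profile 1 = 1"
  using profile_denominator_pos by (simp_all add: profile_def)

lemma continuous_on_profile: "continuous_on UNIV profile"
  unfolding profile_def using profile_denominator_pos by (auto intro!: continuous_intros)

lemma borel_measurable_profile [measurable]: "profile \<in> borel_measurable borel"
  by (rule borel_measurable_continuous_onI[OF continuous_on_profile])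

lemma profile_bounds: "0 \<le> \<sigma> \<Longrightarrow> \<sigma> \<le> 1 \<Longrightarrow> 0 \<le> profile \<sigma> \<and> profile \<sigma> \<le> 1"
  using monoD[OF mono_profile, of 0 \<sigma>] monoD[OF mono_profile, of \<sigma> 1] by simp

lemma v_cont: "continuous_on UNIV v"
  using interp by (simp add: upwinded_interpolant_def)

lemma borel_measurable_u [measurable]: "u \<in> borel_measurable borel"
  by (rule borel_measurable_continuous_onI[OF u_cont])

lemma borel_measurable_v [measurable]: "v \<in> borel_measurable borel"
  by (rule borel_measurable_continuous_onI[OF v_cont])

lemma borel_measurable_error [measurable]: "error \<in> borel_measurable borel"
  unfolding error_def by measurable

lemma borel_measurable_jump_sq [measurable]: "jump_sq \<in> borel_measurable borel"
proof -
  have "(\<lambda>x::real. \<lfloor>x/\<tau>\<rfloor>) \<in> borel \<rightarrow>\<^sub>M count_space UNIV"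
    by (rule measurable_compose[OF _ measurable_real_floor]) measurable
  then show ?thesis
    unfolding jump_sq_def by (rule measurable_compose[where g="\<lambda>k. (jump k)^2"]) simp
qed

lemma cell_bounds:
  assumes "0 \<le> \<sigma>" "\<sigma> \<le> 1"
  shows "(of_int k + \<sigma>) * \<tau> \<in> {of_int k * \<tau> .. (of_int k + 1) * \<tau>}"
  using assms \<tau>_pos by (auto simp: distrib_right)

lemma u_cell:
  assumes "0 \<le> \<sigma>" "\<sigma> \<le> 1"
  shows "u ((of_int k + \<sigma>) * \<tau>) = u (of_int k * \<tau>) + \<sigma> * jump k"
proof -
  obtain a b where ab: "\<And>t. t \<in> {of_int k * \<tau> .. (of_int k + 1) * \<tau>} \<Longrightarrow> u t = a + b * t"
    using u_affine unfolding piecewise_affine_def by blast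
  show ?thesis
    using ab[OF cell_bounds[OF assms]] ab[OF cell_bounds[of 0]] ab[OF cell_bounds[of 1]]
    by (simp add: jump_def algebra_simps)
qed

lemma v_cell:
  assumes "0 \<le> \<sigma>" "\<sigma> \<le> 1"
  shows "v ((of_int k + \<sigma>) * \<tau>) = u (of_int k * \<tau>) + profile \<sigma> * jump k"
proof -
  obtain c1 c2 where c: "\<And>t. t \<in> {of_int k * \<tau> .. (of_int k + 1) * \<tau>} \<Longrightarrow> v t = c1 + c2 * exp (- \<beta> * t / \<alpha>)"
    using interp unfolding upwinded_interpolant_def by blast
  define A where "A = c2 * exp (- \<beta> * of_int k * \<tau> / \<alpha>)"
  have v_exp: "v ((of_int k + s) * \<tau>) = c1 + A * exp (- rate * s)" if "0 \<le> s" "s \<le> 1" for s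
  proof -
    have "exp (- \<beta> * ((of_int k + s) * \<tau>) / \<alpha>) = exp (- \<beta> * of_int k * \<tau> / \<alpha>) * exp (- rate * s)"
      unfolding exp_add[symmetric] using \<alpha>_pos by (simp add: rate_def field_simps)
    then show ?thesis
      using c[OF cell_bounds[OF that]] by (simp add: A_def mult.assoc)
  qed
  have "v (of_int k * \<tau>) = u (of_int k * \<tau>)" "v (of_int (k + 1) * \<tau>) = u (of_int (k + 1) * \<tau>)"
    using interp unfolding upwinded_interpolant_def by blast+
  then have "u (of_int k * \<tau>) = c1 + A" "u ((of_int k + 1) * \<tau>) = c1 + A * exp (- rate)"
    using v_exp[of 0] v_exp[of 1] by simp_all
  then show ?thesis
    using v_exp[OF assms] profile_denominator_pos unfolding profile_def jump_def
    by (simp add: field_simps)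
qed

lemma error_cell:
  assumes "0 \<le> \<sigma>" "\<sigma> \<le> 1"
  shows "error ((of_int k + \<sigma>) * \<tau>) = jump k * (profile \<sigma> - \<sigma>)"
  using u_cell[OF assms] v_cell[OF assms] by (simp add: error_def algebra_simps)

lemma error_sq_le: "(error x)^2 \<le> jump_sq x"
proof -
  define k where "k = \<lfloor>x/\<tau>\<rfloor>"
  define s where "s = frac (x/\<tau>)"
  have x: "x = (of_int k + s) * \<tau>" unfolding k_def s_def using floor_frac_scaled \<tau>_pos by simp
  have s: "0 \<le> s" "s \<le> 1" unfolding s_def by (simp_all add: frac_ge_0 less_imp_le[OF frac_lt_1])
  have "(error x)^2 = (jump k)^2 * (profile s - s)^2"
    using error_cell[OF s, of k] x by (simp add: power_mult_distrib)
  also have "\<dots> \<le> (jump k)^2"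
    using profile_bounds[OF s] s by (intro mult_left_le) (auto simp: abs_square_le_1 abs_le_iff)
  finally show ?thesis unfolding jump_sq_def k_def .
qed

text \<open>One of the two shifts by \<plusminus>\<tau>/2 keeps x inside its cell, and along it u changes by half
  the jump.\<close>

lemma jump_sq_le: "jump_sq x \<le> 4 * (u x - u (x + \<tau>/2))^2 + 4 * (u (x - \<tau>/2) - u x)^2"
proof -
  define k where "k = \<lfloor>x/\<tau>\<rfloor>"
  define s where "s = frac (x/\<tau>)"
  have x: "x = (of_int k + s) * \<tau>" unfolding k_def s_def using floor_frac_scaled \<tau>_pos by simp
  have s: "0 \<le> s" "s < 1" unfolding s_def by (simp_all add: frac_ge_0 frac_lt_1)
  have ux: "u x = u (of_int k * \<tau>) + s * jump k" using u_cell s x by simp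
  show ?thesis
  proof (cases "s \<le> 1/2")
    case True
    have "x + \<tau>/2 = (of_int k + (s + 1/2)) * \<tau>" using x by (simp add: algebra_simps)
    then have "u x - u (x + \<tau>/2) = - jump k / 2" using ux u_cell[of "s + 1/2" k] s True by (simp add: algebra_simps)
    then show ?thesis unfolding jump_sq_def k_def[symmetric] by (simp add: power2_eq_square)
  next
    case False
    have "x - \<tau>/2 = (of_int k + (s - 1/2)) * \<tau>" using x by (simp add: algebra_simps)
    then have "u (x - \<tau>/2) - u x = - jump k / 2" using ux u_cell[of "s - 1/2" k] s False by (simp add: algebra_simps)
    then show ?thesis unfolding jump_sq_def k_def[symmetric] by (simp add: power2_eq_square)
  qed
qed

lemma jump_energy_le: "jump_energy \<le> 8 * shift_diff_sq u (\<tau>/2)"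
proof -
  have "jump_energy \<le> (\<integral>\<^sup>+x. 4 * ennreal ((u x - u (x + \<tau>/2))^2) + 4 * ennreal ((u (x - \<tau>/2) - u x)^2) \<partial>lborel)"
    unfolding jump_energy_def
  proof (rule nn_integral_mono)
    fix x
    have "ennreal (jump_sq x) \<le> ennreal (4 * (u x - u (x + \<tau>/2))^2 + 4 * (u (x - \<tau>/2) - u x)^2)"
      by (rule ennreal_leI[OF jump_sq_le])
    then show "ennreal (jump_sq x) \<le> 4 * ennreal ((u x - u (x + \<tau>/2))^2) + 4 * ennreal ((u (x - \<tau>/2) - u x)^2)"
      by (simp add: ennreal_mult')
  qed
  also have "\<dots> = 4 * shift_diff_sq u (\<tau>/2) + 4 * (\<integral>\<^sup>+x. ennreal ((u (x + - \<tau>/2) - u (x + - \<tau>/2 + \<tau>/2))^2) \<partial>lborel)"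
    unfolding shift_diff_sq_def by (simp add: nn_integral_add nn_integral_cmult)
  also have "(\<integral>\<^sup>+x. ennreal ((u (x + - \<tau>/2) - u (x + - \<tau>/2 + \<tau>/2))^2) \<partial>lborel) = shift_diff_sq u (\<tau>/2)"
    unfolding shift_diff_sq_def by (rule nn_integral_lborel_shift) measurable
  finally show ?thesis by (simp add: distrib_right[symmetric])
qed

lemma nn_integral_jump_sq_frac:
  assumes [measurable]: "b \<in> borel_measurable borel"
  shows "(\<integral>\<^sup>+x. ennreal (jump_sq x) * b (frac (x/\<tau>)) \<partial>lborel) = jump_energy * (\<integral>\<^sup>+s\<in>{0..<1}. b s \<partial>lborel)"
  unfolding jump_energy_def jump_sq_def
  using nn_integral_floor_frac_scaled[OF assms \<tau>_pos, of "\<lambda>k. ennreal ((jump k)^2)"] by simp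

text \<open>The indicator term accounts for the points of a cell whose shift by h leaves the cell.\<close>

definition shift_weight :: "real \<Rightarrow> real \<Rightarrow> ennreal" where
  "shift_weight h \<sigma> = ennreal h + ennreal (profile (min (\<sigma> + h) 1) - profile \<sigma>) + 2 * indicator {1 - h..} \<sigma>"

lemma set_nn_integral_shift_weight:
  assumes "0 < h" "h < 1"
  shows "(\<integral>\<^sup>+\<sigma>\<in>{0..<1}. shift_weight h \<sigma> \<partial>lborel) \<le> 4 * ennreal h"
proof -
  have tail: "(\<integral>\<^sup>+\<sigma>\<in>{0..<1}. indicator {1 - h..} \<sigma> \<partial>lborel) = ennreal h"
  proof -
    have "(\<integral>\<^sup>+\<sigma>\<in>{0..<1}. indicator {1 - h..} \<sigma> \<partial>lborel)
        = (\<integral>\<^sup>+\<sigma>. indicator {1 - h..<1} \<sigma> \<partial>lborel)"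
      using assms by (intro nn_integral_cong) (auto simp: indicator_def)
    then show ?thesis using assms by simp
  qed
  have "(\<integral>\<^sup>+\<sigma>\<in>{0..<1}. shift_weight h \<sigma> \<partial>lborel)
      = ennreal h + (\<integral>\<^sup>+\<sigma>\<in>{0..<1}. ennreal (profile (min (\<sigma> + h) 1) - profile \<sigma>) \<partial>lborel)
        + 2 * ennreal h"
    unfolding shift_weight_def by (simp add: nn_set_integral_add nn_integral_cmult mult.assoc tail)
  also have "\<dots> \<le> ennreal h + ennreal h + 2 * ennreal h"
    using nn_integral_increment_le[OF continuous_on_profile mono_profile] assms
    by (intro add_mono) auto
  finally show ?thesis
    by (simp flip: mult_2 distrib_right)
qed

lemma error_shift_sq_within_cell_le:
  assumes "0 \<le> s" "0 \<le> h" "s + h \<le> 1"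
  shows "(error ((of_int k + s) * \<tau>) - error ((of_int k + (s + h)) * \<tau>))^2
         \<le> (jump k)^2 * (h + (profile (s + h) - profile s))"
proof -
  have "error ((of_int k + s) * \<tau>) - error ((of_int k + (s + h)) * \<tau>)
      = jump k * (h - (profile (s + h) - profile s))"
    using error_cell[of s k] error_cell[of "s + h" k] assms by (simp add: algebra_simps)
  moreover have "(h - (profile (s + h) - profile s))^2 \<le> h + (profile (s + h) - profile s)"
    using assms profile_bounds[of "s + h"] profile_bounds[of s] monoD[OF mono_profile, of s "s + h"]
    by (intro square_diff_le_add) auto
  ultimately show ?thesis
    by (simp add: power_mult_distrib mult_left_mono)
qed

lemma error_shift_sq_le:
  assumes "0 < y" "y < \<tau>"
  defines "h \<equiv> y / \<tau>"
  shows "ennreal ((error x - error (x + y))^2)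
    \<le> ennreal (jump_sq x) * shift_weight h (frac (x/\<tau>))
      + 2 * (ennreal (jump_sq (x + y)) * indicator {..<h} (frac ((x + y)/\<tau>)))"
proof -
  define k where "k = \<lfloor>x/\<tau>\<rfloor>"
  define s where "s = frac (x/\<tau>)"
  have x: "x = (of_int k + s) * \<tau>" unfolding k_def s_def using floor_frac_scaled \<tau>_pos by simp
  have s: "0 \<le> s" "s < 1" unfolding s_def by (simp_all add: frac_ge_0 frac_lt_1)
  have h: "0 < h" "h < 1" unfolding h_def using assms by auto
  have xy: "x + y = (of_int k + (s + h)) * \<tau>" unfolding h_def using x \<tau>_pos by (simp add: field_simps)
  show ?thesis
  proof (cases "s + h \<le> 1")
    case True
    have "0 \<le> profile (s + h) - profile s"
      using monoD[OF mono_profile, of s "s + h"] h by simp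
    moreover have "(error x - error (x + y))^2 \<le> jump_sq x * (h + (profile (s + h) - profile s))"
      using error_shift_sq_within_cell_le[OF s(1) less_imp_le[OF h(1)] True, of k]
      by (simp only: x[symmetric] xy[symmetric] jump_sq_def k_def[symmetric])
    then have "ennreal ((error x - error (x + y))^2) \<le> ennreal (jump_sq x * (h + (profile (s + h) - profile s)))"
      by (rule ennreal_leI)
    ultimately have "ennreal ((error x - error (x + y))^2)
        \<le> ennreal (jump_sq x) * (ennreal h + ennreal (profile (s + h) - profile s))"
      using h by (simp add: ennreal_mult jump_sq_def)
    also have "\<dots> \<le> ennreal (jump_sq x) * shift_weight h s"
      unfolding shift_weight_def using True by (intro mult_left_mono) simp_all
    finally show ?thesis
      unfolding s_def by (rule add_increasing2[rotated]) simp
  next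
    case False
    have "frac ((x + y)/\<tau>) = s + h - 1"
      using frac_add_of_gt_1[of h "x/\<tau>"] False h unfolding s_def h_def by (simp add: add_divide_distrib)
    then have near: "indicator {..<h} (frac ((x + y)/\<tau>)) = (1::ennreal)" using s by simp
    have "2 \<le> shift_weight h s"
      unfolding shift_weight_def using False by (simp add: add_increasing)
    then have "2 * ennreal (jump_sq x) \<le> ennreal (jump_sq x) * shift_weight h s"
      by (subst mult.commute) (rule mult_left_mono, simp_all)
    moreover have "ennreal ((error x - error (x + y))^2) \<le> 2 * ennreal (jump_sq x) + 2 * ennreal (jump_sq (x + y))"
      by (intro ennreal_square_diff_le_sum error_sq_le)
    ultimately show ?thesis
      unfolding s_def near by (auto intro: order_trans add_right_mono)
  qed
qed

lemma shift_diff_sq_error_le_small: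
  assumes "0 < y" "y < \<tau>"
  shows "shift_diff_sq error y \<le> ennreal (6 * y / \<tau>) * jump_energy"
proof -
  define h where "h = y / \<tau>"
  have h: "0 < h" "h < 1" unfolding h_def using assms by auto
  have [measurable]: "shift_weight h \<in> borel_measurable borel"
    unfolding shift_weight_def by measurable
  let ?near = "\<lambda>\<sigma>. indicator {..<h} \<sigma> :: ennreal"
  have "(\<integral>\<^sup>+\<sigma>\<in>{0..<1}. ?near \<sigma> \<partial>lborel) = (\<integral>\<^sup>+\<sigma>. indicator {0..<h} \<sigma> \<partial>lborel)"
    using h by (intro nn_integral_cong) (auto simp: indicator_def)
  then have near: "(\<integral>\<^sup>+\<sigma>\<in>{0..<1}. ?near \<sigma> \<partial>lborel) = ennreal h"
    using h by simp
  have "shift_diff_sq error y \<le> (\<integral>\<^sup>+x. ennreal (jump_sq x) * shift_weight h (frac (x/\<tau>))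
      + 2 * (ennreal (jump_sq (x + y)) * ?near (frac ((x + y)/\<tau>))) \<partial>lborel)"
    unfolding shift_diff_sq_def h_def using error_shift_sq_le[OF assms] by (intro nn_integral_mono)
  also have "\<dots> = (\<integral>\<^sup>+x. ennreal (jump_sq x) * shift_weight h (frac (x/\<tau>)) \<partial>lborel)
      + 2 * (\<integral>\<^sup>+x. ennreal (jump_sq x) * ?near (frac (x/\<tau>)) \<partial>lborel)"
    using nn_integral_lborel_shift[of "\<lambda>x. ennreal (jump_sq x) * ?near (frac (x/\<tau>))" y]
    by (simp add: nn_integral_add nn_integral_cmult)
  also have "\<dots> = jump_energy * (\<integral>\<^sup>+\<sigma>\<in>{0..<1}. shift_weight h \<sigma> \<partial>lborel) + 2 * (jump_energy * ennreal h)"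
    by (simp add: nn_integral_jump_sq_frac near)
  also have "\<dots> \<le> jump_energy * (4 * ennreal h) + 2 * (jump_energy * ennreal h)"
    using set_nn_integral_shift_weight[OF h] by (intro add_mono mult_left_mono) auto
  also have "\<dots> = 6 * ennreal h * jump_energy"
    by (simp add: mult.commute[of jump_energy] mult.assoc flip: distrib_right)
  also have "\<dots> = ennreal (6 * y / \<tau>) * jump_energy"
    using h by (simp add: numeral_mult_ennreal h_def)
  finally show ?thesis .
qed

lemma shift_diff_sq_error_le: "shift_diff_sq error y \<le> ennreal (6 * \<bar>y\<bar> / \<tau>) * jump_energy"
proof (rule shift_diff_sq_abs_le[OF borel_measurable_error, where B = "\<lambda>y. ennreal (6 * y / \<tau>) * jump_energy"])
  fix y :: real
  assume "0 < y"
  show "shift_diff_sq error y \<le> ennreal (6 * y / \<tau>) * jump_energy"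
  proof (cases "y < \<tau>")
    case True
    then show ?thesis using shift_diff_sq_error_le_small[OF \<open>0 < y\<close>] by simp
  next
    case False
    have "shift_diff_sq error y \<le> 4 * jump_energy"
      unfolding jump_energy_def by (intro shift_diff_sq_le_energy error_sq_le) measurable
    also have "\<dots> \<le> ennreal (6 * y / \<tau>) * jump_energy"
      using False \<tau>_pos by (intro mult_right_mono) (simp_all add: field_simps)
    finally show ?thesis .
  qed
qed

lemma jump_energy_le_slob_sq: "jump_energy \<le> ennreal (16 * \<tau>) * slob_sq u"
proof -
  have "jump_energy \<le> 8 * shift_diff_sq u (\<tau>/2)"
    by (rule jump_energy_le)
  also have "\<dots> \<le> 8 * (ennreal (4 * \<bar>\<tau>/2\<bar>) * slob_sq u)"
    by (intro mult_left_mono shift_diff_sq_le_slob_sq) simp_all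
  also have "\<dots> = ennreal (8 * (4 * \<bar>\<tau>/2\<bar>)) * slob_sq u"
    by (simp add: mult.assoc[symmetric] numeral_mult_ennreal)
  also have "8 * (4 * \<bar>\<tau>/2\<bar>) = 16 * \<tau>"
    using \<tau>_pos by simp
  finally show ?thesis .
qed

lemma shift_diff_sq_v_le_slob_sq: "shift_diff_sq v y \<le> ennreal (225 * \<bar>y\<bar>) * slob_sq u"
proof -
  have "shift_diff_sq error y \<le> ennreal (6 * \<bar>y\<bar> / \<tau>) * (ennreal (16 * \<tau>) * slob_sq u)"
    by (intro order_trans[OF shift_diff_sq_error_le] mult_left_mono jump_energy_le_slob_sq) simp
  also have "\<dots> = ennreal (6 * \<bar>y\<bar> / \<tau> * (16 * \<tau>)) * slob_sq u"
    by (subst ennreal_mult'[of "6 * \<bar>y\<bar> / \<tau>" "16 * \<tau>"]) (use \<tau>_pos in \<open>simp_all add: mult.assoc\<close>)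
  also have "6 * \<bar>y\<bar> / \<tau> * (16 * \<tau>) = 96 * \<bar>y\<bar>"
    using \<tau>_pos by simp
  finally have error_le: "shift_diff_sq error y \<le> ennreal (96 * \<bar>y\<bar>) * slob_sq u" .
  have "shift_diff_sq v y \<le> 2 * shift_diff_sq u y + 2 * shift_diff_sq error y"
    using shift_diff_sq_sum_le[of u error y] by (simp add: error_def)
  also have "\<dots> \<le> 2 * (ennreal (4 * \<bar>y\<bar>) * slob_sq u) + 2 * (ennreal (96 * \<bar>y\<bar>) * slob_sq u)"
    by (intro add_mono mult_left_mono shift_diff_sq_le_slob_sq error_le) simp_all
  also have "\<dots> = ennreal (200 * \<bar>y\<bar>) * slob_sq u"
    by (simp add: mult.assoc[symmetric] numeral_mult_ennreal flip: distrib_right ennreal_plus)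
  also have "\<dots> \<le> ennreal (225 * \<bar>y\<bar>) * slob_sq u"
    by (intro mult_right_mono ennreal_leI) auto
  finally show ?thesis .
qed

end

theorem proposition11:
  "\<exists>C :: real. \<forall>\<alpha> \<beta> \<tau> :: real. \<forall>u v :: real \<Rightarrow> real.
     \<alpha> > 0 \<longrightarrow> \<beta> > 0 \<longrightarrow> \<tau> > 0 \<longrightarrow>
     in_H_half u \<longrightarrow> continuous_on UNIV u \<longrightarrow> piecewise_affine \<tau> u \<longrightarrow>
     upwinded_interpolant \<alpha> \<beta> \<tau> u v \<longrightarrow>
     weak_seminorm v \<le> ennreal (C * slob_seminorm u)"
proof (intro exI[of _ 15] allI impI)
  fix \<alpha> \<beta> \<tau> :: real and u v :: "real \<Rightarrow> real"
  assume "\<alpha> > 0" "\<beta> > 0" "\<tau> > 0" "in_H_half u" "continuous_on UNIV u" "piecewise_affine \<tau> u"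
    "upwinded_interpolant \<alpha> \<beta> \<tau> u v"
  then interpret upwind_interpolation \<alpha> \<beta> \<tau> u v
    by unfold_locales
  show "weak_seminorm v \<le> ennreal (15 * slob_seminorm u)"
    using \<open>in_H_half u\<close> shift_diff_sq_v_le_slob_sq
    by (intro weak_seminorm_le_slob_seminorm) (simp_all add: in_H_half_def)
qed

end
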